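(* Let $k$ be a field, $d\ge 1$ an integer, and let $(\mathcal{C},\Sigma^d,\Theta)$ be a $k$-linear, Hom-finite, Krull–Schmidt $(d+2)$-angulated category. Let $X$ be an indecomposable object of $\mathcal{C}$. Then the sets $S(X)$ and $T(X)$ (defined in the context) are both non-empty.
   Context: A $(d+2)$-angulated category (in the sense of Geiss–Keller–Oppermann) is a triple $(\mathcal{C},\Sigma^d,\Theta)$ where $\mathcal{C}$ is an additive category, $\Sigma^d$ is an automorphism of $\mathcal{C}$, and $\Theta$ is a class of sequences $A_0\xrightarrow{\alpha_0}A_1\xrightarrow{\alpha_1}\cdots\xrightarrow{\alpha_d}A_{d+1}\xrightarrow{\alpha_{d+1}}\Sigma^dA_0$ (called $(d+2)$-angles) satisfying the axioms (N1)–(N4): $\Theta$ is closed under isomorphisms, direct sums and direct summands, contains the trivial sequences $A\xrightarrow{1}A\to0\to\cdots\to0\to\Sigma^dA$, and every morphism $A_0\to A_1$ extends to a $(d+2)$-angle; a sequence is in $\Theta$ iff its left rotation $A_1\to\cdots\to A_{d+1}\to\Sigma^dA_0\xrightarrow{(-1)^d\Sigma^d\alpha_0}\Sigma^dA_1$ is; every commutative square between the first two terms of two $(d+2)$-angles extends to a morphism of $(d+2)$-angles; and this extension can be chosen so that the mapping cone is a $(d+2)$-angle. A $(d+2)$-angle is split if $\alpha_{d+1}=0$ (equivalently $\alpha_0$ is a section, equivalently $\alpha_d$ is a retraction). $\mathrm{rad}_{\mathcal{C}}$ denotes the Jacobson radical of $\mathcal{C}$. For an indecomposable $X$, $S(X)$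 is the set of non-split $(d+2)$-angles of the form $A\xrightarrow{\alpha_0}A_1\xrightarrow{\alpha_1}\cdots\xrightarrow{\alpha_{d-1}}A_d\xrightarrow{\alpha_d}X\xrightarrow{\alpha_{d+1}}\Sigma^dA$ with $A$ indecomposable and, when $d\ge2$, $\alpha_1,\dots,\alpha_{d-1}\in\mathrm{rad}_{\mathcal{C}}$. Dually, $T(X)$ is the set of non-split $(d+2)$-angles of the form $X\xrightarrow{\alpha_0}A_1\xrightarrow{\alpha_1}\cdots\xrightarrow{\alpha_{d-1}}A_d\xrightarrow{\alpha_d}A\xrightarrow{\alpha_{d+1}}\Sigma^dX$ with $A$ indecomposable and, when $d\ge2$, $\alpha_1,\dots,\alpha_{d-1}\in\mathrm{rad}_{\mathcal{C}}$. *)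

theory Defs
  imports Main
begin

text \<open>A category with object set Ob, arrow set Ar, source/target maps,
 composition cmp g f (meaning g after f), identities, zero morphisms,
 addition and scalar multiplication by the field 'k on each Hom-set.\<close>

record ('o,'m,'k) kcat =
  Ob  :: "'o set"
  Ar  :: "'m set"
  src :: "'m \<Rightarrow> 'o"
  tgt :: "'m \<Rightarrow> 'o"
  cmp :: "'m \<Rightarrow> 'm \<Rightarrow> 'm"
  ide :: "'o \<Rightarrow> 'm"
  zro :: "'o \<Rightarrow> 'o \<Rightarrow> 'm"
  pls :: "'m \<Rightarrow> 'm \<Rightarrow> 'm"
  scl :: "'k \<Rightarrow> 'm \<Rightarrow> 'm"

definition Hom :: "('o,'m,'k) kcat \<Rightarrow> 'o \<Rightarrow> 'o \<Rightarrow> 'm set" where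
  "Hom C A B = {f \<in> Ar C. src C f = A \<and> tgt C f = B}"

definition neg :: "('o,'m,'k::field) kcat \<Rightarrow> 'm \<Rightarrow> 'm" where
  "neg C f = scl C (-1) f"

definition category :: "('o,'m,'k) kcat \<Rightarrow> bool" where
  "category C \<longleftrightarrow>
     (\<forall>f\<in>Ar C. src C f \<in> Ob C \<and> tgt C f \<in> Ob C) \<and>
     (\<forall>A\<in>Ob C. ide C A \<in> Hom C A A) \<and>
     (\<forall>A B D f g. f \<in> Hom C A B \<longrightarrow> g \<in> Hom C B D \<longrightarrow> cmp C g f \<in> Hom C A D) \<and>
     (\<forall>A B D E f g h. f \<in> Hom C A B \<longrightarrow> g \<in> Hom C B D \<longrightarrow> h \<in> Hom C D E \<longrightarrow>
        cmp C h (cmp C g f) = cmp C (cmp C h g) f) \<and>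
     (\<forall>A B f. f \<in> Hom C A B \<longrightarrow> cmp C f (ide C A) = f \<and> cmp C (ide C B) f = f)"

definition klinear :: "('o,'m,'k::field) kcat \<Rightarrow> bool" where
  "klinear C \<longleftrightarrow> category C \<and>
     (\<forall>A\<in>Ob C. \<forall>B\<in>Ob C. zro C A B \<in> Hom C A B) \<and>
     (\<forall>A B f g. f \<in> Hom C A B \<longrightarrow> g \<in> Hom C A B \<longrightarrow> pls C f g \<in> Hom C A B) \<and>
     (\<forall>A B f c. f \<in> Hom C A B \<longrightarrow> scl C c f \<in> Hom C A B) \<and>
     (\<forall>A B f g h. f \<in> Hom C A B \<longrightarrow> g \<in> Hom C A B \<longrightarrow> h \<in> Hom C A B \<longrightarrow>
        pls C (pls C f g) h = pls C f (pls C g h)) \<and>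
     (\<forall>A B f g. f \<in> Hom C A B \<longrightarrow> g \<in> Hom C A B \<longrightarrow> pls C f g = pls C g f) \<and>
     (\<forall>A B f. f \<in> Hom C A B \<longrightarrow> pls C f (zro C A B) = f) \<and>
     (\<forall>A B f. f \<in> Hom C A B \<longrightarrow> pls C f (neg C f) = zro C A B) \<and>
     (\<forall>A B f g a. f \<in> Hom C A B \<longrightarrow> g \<in> Hom C A B \<longrightarrow>
        scl C a (pls C f g) = pls C (scl C a f) (scl C a g)) \<and>
     (\<forall>A B f a b. f \<in> Hom C A B \<longrightarrow> scl C (a + b) f = pls C (scl C a f) (scl C b f)) \<and>
     (\<forall>A B f a b. f \<in> Hom C A B \<longrightarrow> scl C (a * b) f = scl C a (scl C b f)) \<and>
     (\<forall>A B f. f \<in> Hom C A B \<longrightarrow> scl C 1 f = f) \<and>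
     (\<forall>A B D f f' g. f \<in> Hom C A B \<longrightarrow> f' \<in> Hom C A B \<longrightarrow> g \<in> Hom C B D \<longrightarrow>
        cmp C g (pls C f f') = pls C (cmp C g f) (cmp C g f')) \<and>
     (\<forall>A B D f g g'. f \<in> Hom C A B \<longrightarrow> g \<in> Hom C B D \<longrightarrow> g' \<in> Hom C B D \<longrightarrow>
        cmp C (pls C g g') f = pls C (cmp C g f) (cmp C g' f)) \<and>
     (\<forall>A B D f g a. f \<in> Hom C A B \<longrightarrow> g \<in> Hom C B D \<longrightarrow>
        cmp C (scl C a g) f = scl C a (cmp C g f) \<and> cmp C g (scl C a f) = scl C a (cmp C g f))"

definition iso_arr :: "('o,'m,'k) kcat \<Rightarrow> 'm \<Rightarrow> bool" where
  "iso_arr C f \<longleftrightarrow> f \<in> Ar C \<and>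
     (\<exists>g\<in>Hom C (tgt C f) (src C f).
        cmp C g f = ide C (src C f) \<and> cmp C f g = ide C (tgt C f))"

definition zero_obj :: "('o,'m,'k) kcat \<Rightarrow> 'o \<Rightarrow> bool" where
  "zero_obj C Z \<longleftrightarrow> Z \<in> Ob C \<and>
     (\<forall>A\<in>Ob C. \<exists>!f. f \<in> Hom C Z A) \<and> (\<forall>A\<in>Ob C. \<exists>!f. f \<in> Hom C A Z)"

definition biprod :: "('o,'m,'k) kcat \<Rightarrow> 'o \<Rightarrow> 'o \<Rightarrow> 'o \<Rightarrow> 'm \<Rightarrow> 'm \<Rightarrow> 'm \<Rightarrow> 'm \<Rightarrow> bool" where
  "biprod C X A B i1 i2 p1 p2 \<longleftrightarrow>
     X \<in> Ob C \<and> A \<in> Ob C \<and> B \<in> Ob C \<and>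
     i1 \<in> Hom C A X \<and> i2 \<in> Hom C B X \<and> p1 \<in> Hom C X A \<and> p2 \<in> Hom C X B \<and>
     cmp C p1 i1 = ide C A \<and> cmp C p2 i2 = ide C B \<and>
     cmp C p2 i1 = zro C A B \<and> cmp C p1 i2 = zro C B A \<and>
     pls C (cmp C i1 p1) (cmp C i2 p2) = ide C X"

definition additive_klinear :: "('o,'m,'k::field) kcat \<Rightarrow> bool" where
  "additive_klinear C \<longleftrightarrow> klinear C \<and> (\<exists>Z. zero_obj C Z) \<and>
     (\<forall>A\<in>Ob C. \<forall>B\<in>Ob C. \<exists>X i1 i2 p1 p2. biprod C X A B i1 i2 p1 p2)"

text \<open>k-linear automorphism (SO on objects, SM on arrows) playing the role of \<Sigma>^d.\<close>
definition lin_auto :: "('o,'m,'k::field) kcat \<Rightarrow> ('o \<Rightarrow> 'o) \<Rightarrow> ('m \<Rightarrow> 'm) \<Rightarrow> bool" where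
  "lin_auto C SO SM \<longleftrightarrow>
     bij_betw SO (Ob C) (Ob C) \<and> bij_betw SM (Ar C) (Ar C) \<and>
     (\<forall>f\<in>Ar C. src C (SM f) = SO (src C f) \<and> tgt C (SM f) = SO (tgt C f)) \<and>
     (\<forall>A\<in>Ob C. SM (ide C A) = ide C (SO A)) \<and>
     (\<forall>A B D f g. f \<in> Hom C A B \<longrightarrow> g \<in> Hom C B D \<longrightarrow> SM (cmp C g f) = cmp C (SM g) (SM f)) \<and>
     (\<forall>A B f g. f \<in> Hom C A B \<longrightarrow> g \<in> Hom C A B \<longrightarrow> SM (pls C f g) = pls C (SM f) (SM g)) \<and>
     (\<forall>A B f c. f \<in> Hom C A B \<longrightarrow> SM (scl C c f) = scl C c (SM f))"

text \<open>A sequence is a pair (A, \<alpha>) of functions on nat; only indices 0..d+1 matter.\<close>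

definition is_seq :: "('o,'m,'k) kcat \<Rightarrow> ('o \<Rightarrow> 'o) \<Rightarrow> nat \<Rightarrow> (nat \<Rightarrow> 'o) \<Rightarrow> (nat \<Rightarrow> 'm) \<Rightarrow> bool" where
  "is_seq C SO d A \<alpha> \<longleftrightarrow>
     (\<forall>i\<le>d+1. A i \<in> Ob C) \<and>
     (\<forall>i\<le>d. \<alpha> i \<in> Hom C (A i) (A (Suc i))) \<and>
     \<alpha> (d+1) \<in> Hom C (A (d+1)) (SO (A 0))"

definition seq_mor :: "('o,'m,'k) kcat \<Rightarrow> ('m \<Rightarrow> 'm) \<Rightarrow> nat \<Rightarrow>
    (nat \<Rightarrow> 'o) \<Rightarrow> (nat \<Rightarrow> 'm) \<Rightarrow> (nat \<Rightarrow> 'o) \<Rightarrow> (nat \<Rightarrow> 'm) \<Rightarrow> (nat \<Rightarrow> 'm) \<Rightarrow> bool" where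
  "seq_mor C SM d A \<alpha> B \<beta> \<phi> \<longleftrightarrow>
     (\<forall>i\<le>d+1. \<phi> i \<in> Hom C (A i) (B i)) \<and>
     (\<forall>i\<le>d. cmp C (\<beta> i) (\<phi> i) = cmp C (\<phi> (Suc i)) (\<alpha> i)) \<and>
     cmp C (\<beta> (d+1)) (\<phi> (d+1)) = cmp C (SM (\<phi> 0)) (\<alpha> (d+1))"

definition seq_iso :: "('o,'m,'k) kcat \<Rightarrow> ('m \<Rightarrow> 'm) \<Rightarrow> nat \<Rightarrow>
    (nat \<Rightarrow> 'o) \<Rightarrow> (nat \<Rightarrow> 'm) \<Rightarrow> (nat \<Rightarrow> 'o) \<Rightarrow> (nat \<Rightarrow> 'm) \<Rightarrow> (nat \<Rightarrow> 'm) \<Rightarrow> bool" where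
  "seq_iso C SM d A \<alpha> B \<beta> \<phi> \<longleftrightarrow> seq_mor C SM d A \<alpha> B \<beta> \<phi> \<and> (\<forall>i\<le>d+1. iso_arr C (\<phi> i))"

definition seq_dsum :: "('o,'m,'k) kcat \<Rightarrow> ('m \<Rightarrow> 'm) \<Rightarrow> nat \<Rightarrow>
    (nat \<Rightarrow> 'o) \<Rightarrow> (nat \<Rightarrow> 'm) \<Rightarrow> (nat \<Rightarrow> 'o) \<Rightarrow> (nat \<Rightarrow> 'm) \<Rightarrow> (nat \<Rightarrow> 'o) \<Rightarrow> (nat \<Rightarrow> 'm) \<Rightarrow> bool" where
  "seq_dsum C SM d A \<alpha> B \<beta> D \<gamma> \<longleftrightarrow>
     (\<exists>i1 i2 p1 p2 :: nat \<Rightarrow> 'm.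
        (\<forall>j\<le>d+1. biprod C (D j) (A j) (B j) (i1 j) (i2 j) (p1 j) (p2 j)) \<and>
        (\<forall>j\<le>d. \<gamma> j = pls C (cmp C (i1 (Suc j)) (cmp C (\<alpha> j) (p1 j)))
                            (cmp C (i2 (Suc j)) (cmp C (\<beta> j) (p2 j)))) \<and>
        \<gamma> (d+1) = pls C (cmp C (SM (i1 0)) (cmp C (\<alpha> (d+1)) (p1 (d+1))))
                         (cmp C (SM (i2 0)) (cmp C (\<beta> (d+1)) (p2 (d+1)))))"

definition rot_obj :: "('o \<Rightarrow> 'o) \<Rightarrow> nat \<Rightarrow> (nat \<Rightarrow> 'o) \<Rightarrow> nat \<Rightarrow> 'o" where
  "rot_obj SO d A = (\<lambda>i. if i = d+1 then SO (A 0) else A (Suc i))"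

definition rot_arr :: "('o,'m,'k::field) kcat \<Rightarrow> ('m \<Rightarrow> 'm) \<Rightarrow> nat \<Rightarrow> (nat \<Rightarrow> 'm) \<Rightarrow> nat \<Rightarrow> 'm" where
  "rot_arr C SM d \<alpha> = (\<lambda>i. if i = d+1 then scl C ((-1)^d) (SM (\<alpha> 0)) else \<alpha> (Suc i))"

text \<open>Mapping cone of \<phi> : (A,\<alpha>) \<rightarrow> (B,\<beta>):
  A_1\<oplus>B_0 \<rightarrow> A_2\<oplus>B_1 \<rightarrow> ... \<rightarrow> \<Sigma>A_0\<oplus>B_{d+1} \<rightarrow> \<Sigma>A_1\<oplus>\<Sigma>B_0
  with matrices [[-\<alpha>_{j+1}, 0], [\<phi>_{j+1}, \<beta>_j]] (where \<alpha>_{d+2} = \<Sigma>\<alpha>_0, \<phi>_{d+2} = \<Sigma>\<phi>_0).\<close>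
definition cone :: "('o,'m,'k::field) kcat \<Rightarrow> ('o \<Rightarrow> 'o) \<Rightarrow> ('m \<Rightarrow> 'm) \<Rightarrow> nat \<Rightarrow>
    (nat \<Rightarrow> 'o) \<Rightarrow> (nat \<Rightarrow> 'm) \<Rightarrow> (nat \<Rightarrow> 'o) \<Rightarrow> (nat \<Rightarrow> 'm) \<Rightarrow> (nat \<Rightarrow> 'm) \<Rightarrow>
    (nat \<Rightarrow> 'o) \<Rightarrow> (nat \<Rightarrow> 'm) \<Rightarrow> bool" where
  "cone C SO SM d A \<alpha> B \<beta> \<phi> D \<gamma> \<longleftrightarrow>
     (let A' = (\<lambda>k. if k \<le> d+1 then A k else SO (A 0));
          \<alpha>' = (\<lambda>k. if k \<le> d+1 then \<alpha> k else SM (\<alpha> 0));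
          \<phi>' = (\<lambda>k. if k \<le> d+1 then \<phi> k else SM (\<phi> 0))
      in \<exists>i1 i2 p1 p2 :: nat \<Rightarrow> 'm.
        (\<forall>j\<le>d+1. biprod C (D j) (A' (Suc j)) (B j) (i1 j) (i2 j) (p1 j) (p2 j)) \<and>
        (\<forall>j\<le>d+1.
           (let J1 = (if j = d+1 then SM (i1 0) else i1 (Suc j));
                J2 = (if j = d+1 then SM (i2 0) else i2 (Suc j))
            in \<gamma> j = pls C (pls C (cmp C J1 (cmp C (neg C (\<alpha>' (Suc j))) (p1 j)))
                                  (cmp C J2 (cmp C (\<phi>' (Suc j)) (p1 j))))
                           (cmp C J2 (cmp C (\<beta> j) (p2 j))))))"

section \<open>(d+2)-angulated categories (Geiss--Keller--Oppermann)\<close>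

definition angulated :: "('o,'m,'k::field) kcat \<Rightarrow> ('o \<Rightarrow> 'o) \<Rightarrow> ('m \<Rightarrow> 'm) \<Rightarrow>
    ((nat \<Rightarrow> 'o) \<times> (nat \<Rightarrow> 'm)) set \<Rightarrow> nat \<Rightarrow> bool" where
  "angulated C SO SM \<Theta> d \<longleftrightarrow>
     additive_klinear C \<and> lin_auto C SO SM \<and>
     (\<forall>(A,\<alpha>)\<in>\<Theta>. is_seq C SO d A \<alpha>) \<and>
     \<comment> \<open>(N1a) closed under isomorphisms, direct sums and direct summands\<close>
     (\<forall>A \<alpha> B \<beta> \<phi>. (A,\<alpha>) \<in> \<Theta> \<longrightarrow> is_seq C SO d B \<beta> \<longrightarrow> seq_iso C SM d A \<alpha> B \<beta> \<phi> \<longrightarrow>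
        (B,\<beta>) \<in> \<Theta>) \<and>
     (\<forall>A \<alpha> B \<beta> D \<gamma>. (A,\<alpha>) \<in> \<Theta> \<longrightarrow> (B,\<beta>) \<in> \<Theta> \<longrightarrow> seq_dsum C SM d A \<alpha> B \<beta> D \<gamma> \<longrightarrow>
        (D,\<gamma>) \<in> \<Theta>) \<and>
     (\<forall>A \<alpha> B \<beta> D \<gamma>. is_seq C SO d A \<alpha> \<longrightarrow> is_seq C SO d B \<beta> \<longrightarrow>
        seq_dsum C SM d A \<alpha> B \<beta> D \<gamma> \<longrightarrow> (D,\<gamma>) \<in> \<Theta> \<longrightarrow>
        (A,\<alpha>) \<in> \<Theta> \<and> (B,\<beta>) \<in> \<Theta>) \<and>
     \<comment> \<open>(N1b) trivial sequences A \<rightarrow> A \<rightarrow> 0 \<rightarrow> ... \<rightarrow> 0 \<rightarrow> \<Sigma>^d A\<close>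
     (\<forall>A\<in>Ob C. \<forall>Z. zero_obj C Z \<longrightarrow>
        ((\<lambda>i. if i \<le> 1 then A else Z),
         (\<lambda>i. if i = 0 then ide C A else if i = 1 then zro C A Z
              else if i \<le> d then zro C Z Z else zro C Z (SO A))) \<in> \<Theta>) \<and>
     \<comment> \<open>(N1c) every morphism extends to a (d+2)-angle\<close>
     (\<forall>A0 A1 f. A0 \<in> Ob C \<longrightarrow> A1 \<in> Ob C \<longrightarrow> f \<in> Hom C A0 A1 \<longrightarrow>
        (\<exists>A \<alpha>. (A,\<alpha>) \<in> \<Theta> \<and> A 0 = A0 \<and> A 1 = A1 \<and> \<alpha> 0 = f)) \<and>
     \<comment> \<open>(N2) rotation\<close>
     (\<forall>A \<alpha>. is_seq C SO d A \<alpha> \<longrightarrow>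
        ((A,\<alpha>) \<in> \<Theta> \<longleftrightarrow> (rot_obj SO d A, rot_arr C SM d \<alpha>) \<in> \<Theta>)) \<and>
     \<comment> \<open>(N3) commutative squares extend to morphisms of (d+2)-angles\<close>
     (\<forall>A \<alpha> B \<beta> f0 f1. (A,\<alpha>) \<in> \<Theta> \<longrightarrow> (B,\<beta>) \<in> \<Theta> \<longrightarrow>
        f0 \<in> Hom C (A 0) (B 0) \<longrightarrow> f1 \<in> Hom C (A 1) (B 1) \<longrightarrow>
        cmp C (\<beta> 0) f0 = cmp C f1 (\<alpha> 0) \<longrightarrow>
        (\<exists>\<phi>. seq_mor C SM d A \<alpha> B \<beta> \<phi> \<and> \<phi> 0 = f0 \<and> \<phi> 1 = f1)) \<and>
     \<comment> \<open>(N4) ... and can be chosen with mapping cone a (d+2)-angle\<close>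
     (\<forall>A \<alpha> B \<beta> f0 f1. (A,\<alpha>) \<in> \<Theta> \<longrightarrow> (B,\<beta>) \<in> \<Theta> \<longrightarrow>
        f0 \<in> Hom C (A 0) (B 0) \<longrightarrow> f1 \<in> Hom C (A 1) (B 1) \<longrightarrow>
        cmp C (\<beta> 0) f0 = cmp C f1 (\<alpha> 0) \<longrightarrow>
        (\<exists>\<phi>. seq_mor C SM d A \<alpha> B \<beta> \<phi> \<and> \<phi> 0 = f0 \<and> \<phi> 1 = f1 \<and>
           (\<exists>D \<gamma>. cone C SO SM d A \<alpha> B \<beta> \<phi> D \<gamma> \<and> (D,\<gamma>) \<in> \<Theta>)))"

inductive_set hom_span :: "('o,'m,'k) kcat \<Rightarrow> 'o \<Rightarrow> 'o \<Rightarrow> 'm set \<Rightarrow> 'm set"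
  for C A B F where
  span_zero: "zro C A B \<in> hom_span C A B F"
| span_gen: "g \<in> F \<Longrightarrow> g \<in> hom_span C A B F"
| span_add: "f \<in> hom_span C A B F \<Longrightarrow> g \<in> hom_span C A B F \<Longrightarrow> pls C f g \<in> hom_span C A B F"
| span_scl: "f \<in> hom_span C A B F \<Longrightarrow> scl C c f \<in> hom_span C A B F"

definition hom_finite :: "('o,'m,'k) kcat \<Rightarrow> bool" where
  "hom_finite C \<longleftrightarrow> (\<forall>A\<in>Ob C. \<forall>B\<in>Ob C. \<exists>F. finite F \<and> F \<subseteq> Hom C A B \<and>
      Hom C A B \<subseteq> hom_span C A B F)"

definition local_obj :: "('o,'m,'k::field) kcat \<Rightarrow> 'o \<Rightarrow> bool" where
  "local_obj C A \<longleftrightarrow> A \<in> Ob C \<and> ide C A \<noteq> zro C A A \<and>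
     (\<forall>f\<in>Hom C A A. iso_arr C f \<or> iso_arr C (pls C (ide C A) (neg C f)))"

fun is_dsum :: "('o,'m,'k) kcat \<Rightarrow> 'o \<Rightarrow> 'o list \<Rightarrow> bool" where
  "is_dsum C X [] = zero_obj C X"
| "is_dsum C X (A # As) = (\<exists>Y i1 i2 p1 p2. biprod C X A Y i1 i2 p1 p2 \<and> is_dsum C Y As)"

definition krull_schmidt :: "('o,'m,'k::field) kcat \<Rightarrow> bool" where
  "krull_schmidt C \<longleftrightarrow> (\<forall>X\<in>Ob C. \<exists>As. (\<forall>A\<in>set As. local_obj C A) \<and> is_dsum C X As)"

definition indec :: "('o,'m,'k) kcat \<Rightarrow> 'o \<Rightarrow> bool" where
  "indec C X \<longleftrightarrow> X \<in> Ob C \<and> \<not> zero_obj C X \<and>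
     (\<forall>A B i1 i2 p1 p2. biprod C X A B i1 i2 p1 p2 \<longrightarrow> zero_obj C A \<or> zero_obj C B)"

definition rad :: "('o,'m,'k::field) kcat \<Rightarrow> 'o \<Rightarrow> 'o \<Rightarrow> 'm set" where
  "rad C A B = {f \<in> Hom C A B. \<forall>g\<in>Hom C B A. iso_arr C (pls C (ide C A) (neg C (cmp C g f)))}"

definition S_set :: "('o,'m,'k::field) kcat \<Rightarrow> ('o \<Rightarrow> 'o) \<Rightarrow>
    ((nat \<Rightarrow> 'o) \<times> (nat \<Rightarrow> 'm)) set \<Rightarrow> nat \<Rightarrow> 'o \<Rightarrow> ((nat \<Rightarrow> 'o) \<times> (nat \<Rightarrow> 'm)) set" where
  "S_set C SO \<Theta> d X = {(A,\<alpha>) \<in> \<Theta>. A (d+1) = X \<and> indec C (A 0) \<and>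
      \<alpha> (d+1) \<noteq> zro C (A (d+1)) (SO (A 0)) \<and>
      (d \<ge> 2 \<longrightarrow> (\<forall>i. 1 \<le> i \<and> i \<le> d - 1 \<longrightarrow> \<alpha> i \<in> rad C (A i) (A (Suc i))))}"

definition T_set :: "('o,'m,'k::field) kcat \<Rightarrow> ('o \<Rightarrow> 'o) \<Rightarrow>
    ((nat \<Rightarrow> 'o) \<times> (nat \<Rightarrow> 'm)) set \<Rightarrow> nat \<Rightarrow> 'o \<Rightarrow> ((nat \<Rightarrow> 'o) \<times> (nat \<Rightarrow> 'm)) set" where
  "T_set C SO \<Theta> d X = {(A,\<alpha>) \<in> \<Theta>. A 0 = X \<and> indec C (A (d+1)) \<and>
      \<alpha> (d+1) \<noteq> zro C (A (d+1)) (SO (A 0)) \<and>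
      (d \<ge> 2 \<longrightarrow> (\<forall>i. 1 \<le> i \<and> i \<le> d - 1 \<longrightarrow> \<alpha> i \<in> rad C (A i) (A (Suc i))))}"

end

theory Submission
  imports Defs
begin

(* Rotating the trivial (d+2)-angle A -> A -> 0 -> ... -> 0 -> \<Sigma>^d A once gives
   A -> 0 -> ... -> 0 -> \<Sigma>^d A -> \<Sigma>^d A, whose last map (-1)^d 1 is nonzero, so the angle
   is non-split, and whose inner maps start at a zero object and so lie in the radical.
   For indecomposable A it therefore lies in T(A) and in S(\<Sigma>^d A). As \<Sigma>^d is an
   automorphism it preserves and reflects indecomposability, so A = X and A = \<Sigma>^-d X give
   the two claims. *)

locale klinear_category =
  fixes C :: "('o,'m,'k::field) kcat"
  assumes klinear: "klinear C"
begin

lemma hom_zro: "A \<in> Ob C \<Longrightarrow> B \<in> Ob C \<Longrightarrow> zro C A B \<in> Hom C A B"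
  using klinear unfolding klinear_def by (elim conjE) simp

lemma hom_pls: "f \<in> Hom C A B \<Longrightarrow> g \<in> Hom C A B \<Longrightarrow> pls C f g \<in> Hom C A B"
  using klinear unfolding klinear_def by (elim conjE) simp

lemma hom_scl: "f \<in> Hom C A B \<Longrightarrow> scl C c f \<in> Hom C A B"
  using klinear unfolding klinear_def by (elim conjE) simp

lemma hom_neg: "f \<in> Hom C A B \<Longrightarrow> neg C f \<in> Hom C A B"
  unfolding neg_def by (rule hom_scl)

lemma hom_ide: "A \<in> Ob C \<Longrightarrow> ide C A \<in> Hom C A A"
  using klinear unfolding klinear_def category_def by (elim conjE) simp

lemma hom_cmp: "f \<in> Hom C A B \<Longrightarrow> g \<in> Hom C B D \<Longrightarrow> cmp C g f \<in> Hom C A D"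
  using klinear unfolding klinear_def category_def by (elim conjE) simp

lemma Ar_src_tgt: "f \<in> Ar C \<Longrightarrow> src C f \<in> Ob C \<and> tgt C f \<in> Ob C"
  using klinear unfolding klinear_def category_def by (elim conjE) simp

lemma pls_assoc:
  "f \<in> Hom C A B \<Longrightarrow> g \<in> Hom C A B \<Longrightarrow> h \<in> Hom C A B \<Longrightarrow>
    pls C (pls C f g) h = pls C f (pls C g h)"
  using klinear unfolding klinear_def by (elim conjE) simp

lemma pls_zro_right: "f \<in> Hom C A B \<Longrightarrow> pls C f (zro C A B) = f"
  using klinear unfolding klinear_def by (elim conjE) simp

lemma pls_neg_right: "f \<in> Hom C A B \<Longrightarrow> pls C f (neg C f) = zro C A B"
  using klinear unfolding klinear_def by (elim conjE) simp

lemma scl_pls: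
  "f \<in> Hom C A B \<Longrightarrow> g \<in> Hom C A B \<Longrightarrow> scl C a (pls C f g) = pls C (scl C a f) (scl C a g)"
  using klinear unfolding klinear_def by (elim conjE) simp

lemma scl_mult: "f \<in> Hom C A B \<Longrightarrow> scl C (a * b) f = scl C a (scl C b f)"
  using klinear unfolding klinear_def by (elim conjE) simp

lemma scl_one: "f \<in> Hom C A B \<Longrightarrow> scl C 1 f = f"
  using klinear unfolding klinear_def by (elim conjE) simp

lemma cmp_pls_right:
  "f \<in> Hom C A B \<Longrightarrow> f' \<in> Hom C A B \<Longrightarrow> g \<in> Hom C B D \<Longrightarrow>
    cmp C g (pls C f f') = pls C (cmp C g f) (cmp C g f')"
  using klinear unfolding klinear_def by (elim conjE) simp

lemma cmp_pls_left:
  "f \<in> Hom C A B \<Longrightarrow> g \<in> Hom C B D \<Longrightarrow> g' \<in> Hom C B D \<Longrightarrow>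
    cmp C (pls C g g') f = pls C (cmp C g f) (cmp C g' f)"
  using klinear unfolding klinear_def by (elim conjE) simp

lemma cmp_ide_right: "f \<in> Hom C A B \<Longrightarrow> cmp C f (ide C A) = f"
  using klinear unfolding klinear_def category_def by (elim conjE) simp

lemma cmp_ide_left: "f \<in> Hom C A B \<Longrightarrow> cmp C (ide C B) f = f"
  using klinear unfolding klinear_def category_def by (elim conjE) simp

lemma pls_idem_eq_zro:
  assumes f: "f \<in> Hom C A B" and idem: "pls C f f = f"
  shows "f = zro C A B"
proof -
  have "zro C A B = pls C (pls C f f) (neg C f)"
    using pls_neg_right[OF f] idem by simp
  also have "\<dots> = pls C f (zro C A B)"
    using pls_assoc[OF f f hom_neg[OF f]] pls_neg_right[OF f] by simp
  also have "\<dots> = f"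
    using pls_zro_right[OF f] .
  finally show ?thesis by simp
qed

lemma pls_zro_zro: "A \<in> Ob C \<Longrightarrow> B \<in> Ob C \<Longrightarrow> pls C (zro C A B) (zro C A B) = zro C A B"
  using pls_zro_right hom_zro by blast

lemma scl_zro:
  assumes "A \<in> Ob C" "B \<in> Ob C"
  shows "scl C c (zro C A B) = zro C A B"
proof (rule pls_idem_eq_zro)
  have z: "zro C A B \<in> Hom C A B"
    using hom_zro assms .
  then show "scl C c (zro C A B) \<in> Hom C A B"
    by (rule hom_scl)
  show "pls C (scl C c (zro C A B)) (scl C c (zro C A B)) = scl C c (zro C A B)"
    using scl_pls[OF z z] pls_zro_zro[OF assms] by simp
qed

lemma zero_obj_iff_ide_eq_zro: "zero_obj C Y \<longleftrightarrow> Y \<in> Ob C \<and> ide C Y = zro C Y Y"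
proof
  assume "zero_obj C Y"
  then show "Y \<in> Ob C \<and> ide C Y = zro C Y Y"
    unfolding zero_obj_def using hom_ide hom_zro by blast
next
  assume "Y \<in> Ob C \<and> ide C Y = zro C Y Y"
  then have Y: "Y \<in> Ob C" and ide: "ide C Y = zro C Y Y"
    by auto
  let ?z = "zro C Y Y"
  have z: "?z \<in> Hom C Y Y"
    using hom_zro[OF Y Y] .
  have out: "f = zro C Y B" if f: "f \<in> Hom C Y B" for f B
  proof -
    have "pls C (cmp C f ?z) (cmp C f ?z) = cmp C f ?z"
      using cmp_pls_right[OF z z f] pls_zro_zro[OF Y Y] by simp
    then have "cmp C f ?z = zro C Y B"
      using pls_idem_eq_zro[OF hom_cmp[OF z f]] by simp
    then show ?thesis
      using cmp_ide_right[OF f] ide by simp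
  qed
  have into: "f = zro C B Y" if f: "f \<in> Hom C B Y" for f B
  proof -
    have "pls C (cmp C ?z f) (cmp C ?z f) = cmp C ?z f"
      using cmp_pls_left[OF f z z] pls_zro_zro[OF Y Y] by simp
    then have "cmp C ?z f = zro C B Y"
      using pls_idem_eq_zro[OF hom_cmp[OF f z]] by simp
    then show ?thesis
      using cmp_ide_left[OF f] ide by simp
  qed
  show "zero_obj C Y"
    unfolding zero_obj_def using Y out into hom_zro by blast
qed

lemma scl_ide_neq_zro:
  assumes Y: "Y \<in> Ob C" and nonzero: "\<not> zero_obj C Y" and c: "c \<noteq> 0"
  shows "scl C c (ide C Y) \<noteq> zro C Y Y"
proof
  assume vanish: "scl C c (ide C Y) = zro C Y Y"
  have "ide C Y = scl C (inverse c * c) (ide C Y)"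
    using scl_one[OF hom_ide[OF Y]] c by simp
  also have "\<dots> = zro C Y Y"
    using scl_mult[OF hom_ide[OF Y]] vanish scl_zro[OF Y Y] by simp
  finally show False
    using nonzero Y zero_obj_iff_ide_eq_zro by blast
qed

lemma iso_arr_ide: "A \<in> Ob C \<Longrightarrow> iso_arr C (ide C A)"
  unfolding iso_arr_def using hom_ide cmp_ide_right by (fastforce simp: Hom_def)

lemma zero_obj_Hom_rad:
  assumes Z: "zero_obj C Z" and f: "f \<in> Hom C Z B"
  shows "f \<in> rad C Z B"
  unfolding rad_def
proof (intro CollectI conjI ballI f)
  fix g assume g: "g \<in> Hom C B Z"
  have ZOb: "Z \<in> Ob C"
    using Z by (simp add: zero_obj_def)
  have "pls C (ide C Z) (neg C (cmp C g f)) \<in> Hom C Z Z"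
    using hom_pls[OF hom_ide[OF ZOb] hom_neg[OF hom_cmp[OF f g]]] .
  then have "pls C (ide C Z) (neg C (cmp C g f)) = ide C Z"
    using Z hom_ide[OF ZOb] unfolding zero_obj_def by blast
  then show "iso_arr C (pls C (ide C Z) (neg C (cmp C g f)))"
    using iso_arr_ide[OF ZOb] by simp
qed

end

locale klinear_automorphism = klinear_category +
  fixes SO :: "'o \<Rightarrow> 'o" and SM :: "'m \<Rightarrow> 'm"
  assumes lin_auto: "lin_auto C SO SM"
begin

lemma bij_SO: "bij_betw SO (Ob C) (Ob C)"
  using lin_auto unfolding lin_auto_def by (elim conjE)

lemma bij_SM: "bij_betw SM (Ar C) (Ar C)"
  using lin_auto unfolding lin_auto_def by (elim conjE)

lemma SO_Ob: "A \<in> Ob C \<Longrightarrow> SO A \<in> Ob C"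
  using bij_SO bij_betwE by blast

lemma SO_surj: "Y \<in> Ob C \<Longrightarrow> \<exists>A\<in>Ob C. SO A = Y"
  using bij_SO unfolding bij_betw_def by (metis imageE)

lemma SM_surj: "g \<in> Ar C \<Longrightarrow> \<exists>f\<in>Ar C. SM f = g"
  using bij_SM unfolding bij_betw_def by (metis imageE)

lemma SM_src_tgt: "f \<in> Ar C \<Longrightarrow> src C (SM f) = SO (src C f) \<and> tgt C (SM f) = SO (tgt C f)"
  using lin_auto unfolding lin_auto_def by (elim conjE) simp

lemma SM_ide: "A \<in> Ob C \<Longrightarrow> SM (ide C A) = ide C (SO A)"
  using lin_auto unfolding lin_auto_def by (elim conjE) simp

lemma SM_cmp: "f \<in> Hom C A B \<Longrightarrow> g \<in> Hom C B D \<Longrightarrow> SM (cmp C g f) = cmp C (SM g) (SM f)"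
  using lin_auto unfolding lin_auto_def by (elim conjE) simp

lemma SM_pls: "f \<in> Hom C A B \<Longrightarrow> g \<in> Hom C A B \<Longrightarrow> SM (pls C f g) = pls C (SM f) (SM g)"
  using lin_auto unfolding lin_auto_def by (elim conjE) simp

lemma SM_hom: "f \<in> Hom C A B \<Longrightarrow> SM f \<in> Hom C (SO A) (SO B)"
  using bij_SM bij_betwE SM_src_tgt unfolding Hom_def by fastforce

lemma SM_eq_iff: "f \<in> Hom C A B \<Longrightarrow> g \<in> Hom C A' B' \<Longrightarrow> SM f = SM g \<longleftrightarrow> f = g"
  using bij_SM unfolding bij_betw_def inj_on_def Hom_def by blast

lemma SM_zro:
  assumes "A \<in> Ob C" "B \<in> Ob C"
  shows "SM (zro C A B) = zro C (SO A) (SO B)"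
proof (rule pls_idem_eq_zro)
  have z: "zro C A B \<in> Hom C A B"
    using hom_zro assms .
  then show "SM (zro C A B) \<in> Hom C (SO A) (SO B)"
    by (rule SM_hom)
  show "pls C (SM (zro C A B)) (SM (zro C A B)) = SM (zro C A B)"
    using SM_pls[OF z z] pls_zro_zro[OF assms] by simp
qed

lemma SM_preimage:
  assumes A: "A \<in> Ob C" and B: "B \<in> Ob C" and g: "g \<in> Hom C (SO A) (SO B)"
  obtains f where "f \<in> Hom C A B" and "SM f = g"
proof -
  obtain f where f: "f \<in> Ar C" and g_eq: "SM f = g"
    using g SM_surj unfolding Hom_def by blast
  have "SO (src C f) = SO A" and "SO (tgt C f) = SO B"
    using SM_src_tgt[OF f] g g_eq unfolding Hom_def by auto
  then have "src C f = A" and "tgt C f = B"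
    using bij_SO Ar_src_tgt[OF f] A B unfolding bij_betw_def inj_on_def by auto
  then show thesis
    using that f g_eq unfolding Hom_def by blast
qed

lemma zero_obj_SO_iff: "A \<in> Ob C \<Longrightarrow> zero_obj C (SO A) \<longleftrightarrow> zero_obj C A"
  unfolding zero_obj_iff_ide_eq_zro
  using SO_Ob SM_ide SM_zro SM_eq_iff[OF hom_ide hom_zro] by metis

lemma biprod_SM_iff:
  assumes X: "X \<in> Ob C" and A: "A \<in> Ob C" and B: "B \<in> Ob C"
    and i1: "i1 \<in> Hom C A X" and i2: "i2 \<in> Hom C B X"
    and p1: "p1 \<in> Hom C X A" and p2: "p2 \<in> Hom C X B"
  shows "biprod C (SO X) (SO A) (SO B) (SM i1) (SM i2) (SM p1) (SM p2)
    \<longleftrightarrow> biprod C X A B i1 i2 p1 p2"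
proof -
  have "cmp C (SM p1) (SM i1) = ide C (SO A) \<longleftrightarrow> cmp C p1 i1 = ide C A"
    using SM_cmp[OF i1 p1] SM_ide[OF A] SM_eq_iff[OF hom_cmp[OF i1 p1] hom_ide[OF A]] by simp
  moreover have "cmp C (SM p2) (SM i2) = ide C (SO B) \<longleftrightarrow> cmp C p2 i2 = ide C B"
    using SM_cmp[OF i2 p2] SM_ide[OF B] SM_eq_iff[OF hom_cmp[OF i2 p2] hom_ide[OF B]] by simp
  moreover have "cmp C (SM p2) (SM i1) = zro C (SO A) (SO B) \<longleftrightarrow> cmp C p2 i1 = zro C A B"
    using SM_cmp[OF i1 p2] SM_zro[OF A B] SM_eq_iff[OF hom_cmp[OF i1 p2] hom_zro[OF A B]] by simp
  moreover have "cmp C (SM p1) (SM i2) = zro C (SO B) (SO A) \<longleftrightarrow> cmp C p1 i2 = zro C B A"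
    using SM_cmp[OF i2 p1] SM_zro[OF B A] SM_eq_iff[OF hom_cmp[OF i2 p1] hom_zro[OF B A]] by simp
  moreover have "pls C (cmp C (SM i1) (SM p1)) (cmp C (SM i2) (SM p2)) = ide C (SO X)
      \<longleftrightarrow> pls C (cmp C i1 p1) (cmp C i2 p2) = ide C X"
    using SM_cmp[OF p1 i1] SM_cmp[OF p2 i2] SM_pls[OF hom_cmp[OF p1 i1] hom_cmp[OF p2 i2]]
      SM_ide[OF X] SM_eq_iff[OF hom_pls[OF hom_cmp[OF p1 i1] hom_cmp[OF p2 i2]] hom_ide[OF X]]
    by simp
  ultimately show ?thesis
    unfolding biprod_def using X A B i1 i2 p1 p2 SO_Ob SM_hom by simp
qed

lemma biprod_SM:
  "biprod C X A B i1 i2 p1 p2 \<Longrightarrow> biprod C (SO X) (SO A) (SO B) (SM i1) (SM i2) (SM p1) (SM p2)"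
  using biprod_SM_iff unfolding biprod_def by blast

lemma biprod_SO_preimage:
  assumes sum: "biprod C (SO X) A' B' j1 j2 q1 q2" and X: "X \<in> Ob C"
  obtains A B i1 i2 p1 p2 where "SO A = A'" and "SO B = B'" and "biprod C X A B i1 i2 p1 p2"
proof -
  obtain A B where A: "A \<in> Ob C" "SO A = A'" and B: "B \<in> Ob C" "SO B = B'"
    using sum SO_surj unfolding biprod_def by meson
  then have "j1 \<in> Hom C (SO A) (SO X)" "j2 \<in> Hom C (SO B) (SO X)"
    and "q1 \<in> Hom C (SO X) (SO A)" "q2 \<in> Hom C (SO X) (SO B)"
    using sum unfolding biprod_def by auto
  then obtain i1 i2 p1 p2
    where i1: "i1 \<in> Hom C A X" "SM i1 = j1" and i2: "i2 \<in> Hom C B X" "SM i2 = j2"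
      and p1: "p1 \<in> Hom C X A" "SM p1 = q1" and p2: "p2 \<in> Hom C X B" "SM p2 = q2"
    using SM_preimage X A(1) B(1) by metis
  have "biprod C X A B i1 i2 p1 p2"
    using biprod_SM_iff[OF X A(1) B(1) i1(1) i2(1) p1(1) p2(1)] sum A B i1 i2 p1 p2 by simp
  then show thesis
    using that A B by blast
qed

lemma indec_SO_iff:
  assumes X: "X \<in> Ob C"
  shows "indec C (SO X) \<longleftrightarrow> indec C X"
proof
  assume indec_SX: "indec C (SO X)"
  have "zero_obj C A \<or> zero_obj C B" if "biprod C X A B i1 i2 p1 p2" for A B i1 i2 p1 p2
  proof -
    have "A \<in> Ob C" "B \<in> Ob C"
      using that unfolding biprod_def by auto
    then show ?thesis
      using indec_SX biprod_SM[OF that] zero_obj_SO_iff unfolding indec_def by blast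
  qed
  then show "indec C X"
    using indec_SX X zero_obj_SO_iff unfolding indec_def by blast
next
  assume indec_X: "indec C X"
  have "zero_obj C A' \<or> zero_obj C B'"
    if sum': "biprod C (SO X) A' B' j1 j2 q1 q2" for A' B' j1 j2 q1 q2
  proof -
    obtain A B i1 i2 p1 p2 where "SO A = A'" "SO B = B'" and sum: "biprod C X A B i1 i2 p1 p2"
      using biprod_SO_preimage[OF sum' X] .
    moreover have "A \<in> Ob C" "B \<in> Ob C"
      using sum unfolding biprod_def by auto
    ultimately show ?thesis
      using indec_X zero_obj_SO_iff unfolding indec_def by blast
  qed
  then show "indec C (SO X)"
    using indec_X X SO_Ob zero_obj_SO_iff unfolding indec_def by blast
qed

end

definition trivial_angle_obj :: "'o \<Rightarrow> 'o \<Rightarrow> nat \<Rightarrow> 'o" where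
  "trivial_angle_obj A Z = (\<lambda>i. if i \<le> 1 then A else Z)"

definition trivial_angle_arr :: "('o,'m,'k) kcat \<Rightarrow> ('o \<Rightarrow> 'o) \<Rightarrow> nat \<Rightarrow> 'o \<Rightarrow> 'o \<Rightarrow> nat \<Rightarrow> 'm" where
  "trivial_angle_arr C SO d A Z = (\<lambda>i. if i = 0 then ide C A else if i = 1 then zro C A Z
     else if i \<le> d then zro C Z Z else zro C Z (SO A))"

locale angulated_category =
  fixes C :: "('o,'m,'k::field) kcat"
    and SO :: "'o \<Rightarrow> 'o" and SM :: "'m \<Rightarrow> 'm"
    and \<Theta> :: "((nat \<Rightarrow> 'o) \<times> (nat \<Rightarrow> 'm)) set"
    and d :: nat
  assumes angulated: "angulated C SO SM \<Theta> d"

sublocale angulated_category \<subseteq> klinear_automorphism C SO SM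
proof unfold_locales
  show "klinear C"
    using angulated unfolding angulated_def additive_klinear_def by (elim conjE)
  show "lin_auto C SO SM"
    using angulated unfolding angulated_def by (elim conjE)
qed

context angulated_category
begin

lemma zero_obj_exists: "\<exists>Z. zero_obj C Z"
  using angulated unfolding angulated_def additive_klinear_def by (elim conjE)

lemma angle_is_seq: "(A, \<alpha>) \<in> \<Theta> \<Longrightarrow> is_seq C SO d A \<alpha>"
  using angulated unfolding angulated_def by (elim conjE) blast

lemma trivial_angle: "A \<in> Ob C \<Longrightarrow> zero_obj C Z \<Longrightarrow> (trivial_angle_obj A Z, trivial_angle_arr C SO d A Z) \<in> \<Theta>"
  using angulated unfolding angulated_def trivial_angle_obj_def trivial_angle_arr_def
  by (elim conjE) blast

lemma rotate_angle:
  assumes angle: "(A, \<alpha>) \<in> \<Theta>"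
  shows "(rot_obj SO d A, rot_arr C SM d \<alpha>) \<in> \<Theta>"
proof -
  have "\<forall>A \<alpha>. is_seq C SO d A \<alpha> \<longrightarrow>
      ((A, \<alpha>) \<in> \<Theta> \<longleftrightarrow> (rot_obj SO d A, rot_arr C SM d \<alpha>) \<in> \<Theta>)"
    using angulated unfolding angulated_def by (elim conjE)
  then show ?thesis
    using angle angle_is_seq[OF angle] by blast
qed

lemma rotated_trivial_angle_in_T_S:
  assumes d: "d \<ge> 1" and A: "indec C A" and Z: "zero_obj C Z"
  defines "B \<equiv> rot_obj SO d (trivial_angle_obj A Z)"
    and "\<beta> \<equiv> rot_arr C SM d (trivial_angle_arr C SO d A Z)"
  shows "(B, \<beta>) \<in> T_set C SO \<Theta> d A \<inter> S_set C SO \<Theta> d (SO A)"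
proof -
  have A_Ob: "A \<in> Ob C" and A_nonzero: "\<not> zero_obj C A"
    using A unfolding indec_def by auto
  have Z_Ob: "Z \<in> Ob C"
    using Z unfolding zero_obj_def by blast
  have angle: "(B, \<beta>) \<in> \<Theta>"
    unfolding B_def \<beta>_def using rotate_angle trivial_angle[OF A_Ob Z] .
  have ends: "B 0 = A" "B (d+1) = SO A"
    using d unfolding B_def rot_obj_def trivial_angle_obj_def by auto
  have "\<beta> (d+1) = scl C ((-1)^d) (ide C (SO A))"
    unfolding \<beta>_def rot_arr_def trivial_angle_arr_def using SM_ide[OF A_Ob] by simp
  then have nonsplit: "\<beta> (d+1) \<noteq> zro C (B (d+1)) (SO (B 0))"
    using ends scl_ide_neq_zro[OF SO_Ob[OF A_Ob]] zero_obj_SO_iff[OF A_Ob] A_nonzero by simp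
  have radical: "\<beta> i \<in> rad C (B i) (B (Suc i))" if "1 \<le> i" "i \<le> d - 1" for i
  proof -
    have "B i = Z" "B (Suc i) = Z" "\<beta> i = zro C Z Z"
      using that d unfolding B_def \<beta>_def rot_obj_def rot_arr_def trivial_angle_obj_def
        trivial_angle_arr_def by auto
    then show ?thesis
      using zero_obj_Hom_rad[OF Z hom_zro[OF Z_Ob Z_Ob]] by simp
  qed
  have "indec C (SO A)"
    using indec_SO_iff[OF A_Ob] A by simp
  then show ?thesis
    unfolding T_set_def S_set_def using angle ends nonsplit radical A by simp
qed

end

theorem lemma3p3:
  fixes C :: "('o,'m,'k::field) kcat"
    and SO :: "'o \<Rightarrow> 'o" and SM :: "'m \<Rightarrow> 'm"
    and \<Theta> :: "((nat \<Rightarrow> 'o) \<times> (nat \<Rightarrow> 'm)) set"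
    and d :: nat and X :: 'o
  assumes "d \<ge> 1"
    and "angulated C SO SM \<Theta> d"
    and "hom_finite C"
    and "krull_schmidt C"
    and "indec C X"
  shows "S_set C SO \<Theta> d X \<noteq> {} \<and> T_set C SO \<Theta> d X \<noteq> {}"
proof -
  interpret angulated_category C SO SM \<Theta> d
    using assms(2) by unfold_locales
  obtain Z where Z: "zero_obj C Z"
    using zero_obj_exists by blast
  have X_Ob: "X \<in> Ob C"
    using assms(5) unfolding indec_def by blast
  then obtain A where A_Ob: "A \<in> Ob C" and X_eq: "SO A = X"
    using SO_surj by blast
  have "indec C A"
    using indec_SO_iff[OF A_Ob] X_eq assms(5) by simp
  then have "S_set C SO \<Theta> d X \<noteq> {}"
    using rotated_trivial_angle_in_T_S[OF assms(1) _ Z] X_eq by blast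
  moreover have "T_set C SO \<Theta> d X \<noteq> {}"
    using rotated_trivial_angle_in_T_S[OF assms(1) assms(5) Z] by blast
  ultimately show ?thesis ..
qed

end
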